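(* For every positive integer $h$ there exist positive integers $s,r,R$ with $s,r\ge 2$ such that $\delta=(r+1)(R+1)-sr-1=-h$ and $\mathrm{Perf}(s,r,R)=\emptyset$.
   Context: $q$ is a prime power, $\mathbb F_q^{s\times r}$ the set of $s\times r$ matrices over $\mathbb F_q$ with rows in $\mathbb F_q^{1\times r}$. For a row $y=(y_1,\dots,y_r)$, the NRT weight is $w(y)=\max\{j: y_j\neq 0\}$ if $y\ne0$ and $w(0)=0$; for a matrix, $w(x)=\sum_i w(x_i)$. The NRT metric is $d(x,y)=w(x-y)$; $B(c,R)=\{x: d(x,c)\le R\}$. A code $C$ is $R$-perfect if the balls $B(c,R)$, $c\in C$, are pairwise disjoint and cover $\mathbb F_q^{s\times r}$; non-trivial means $|C|>1$ and $C\ne\mathbb F_q^{s\times r}$. $\mathrm{Perf}(s,r,R)$ is the set of non-trivial $R$-perfect codes in $\mathbb F_q^{s\times r}$. *)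

theory Defs
  imports Main
begin

text \<open>Matrices in F_q^{s x r} are represented as functions nat => nat => 'a
  (row index i < s, column index j < r, both 0-based) vanishing outside the box.
  The field F_q is an arbitrary finite field type 'a (q = CARD('a)).\<close>

definition mat_space :: "nat \<Rightarrow> nat \<Rightarrow> (nat \<Rightarrow> nat \<Rightarrow> 'a::zero) set" where
  "mat_space s r = {x. \<forall>i j. (s \<le> i \<or> r \<le> j) \<longrightarrow> x i j = 0}"

definition row_weight :: "nat \<Rightarrow> (nat \<Rightarrow> 'a::zero) \<Rightarrow> nat" where
  "row_weight r y = (if \<exists>j<r. y j \<noteq> 0 then Suc (Max {j. j < r \<and> y j \<noteq> 0}) else 0)"

definition nrt_weight :: "nat \<Rightarrow> nat \<Rightarrow> (nat \<Rightarrow> nat \<Rightarrow> 'a::zero) \<Rightarrow> nat" where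
  "nrt_weight s r x = (\<Sum>i<s. row_weight r (x i))"

definition nrt_dist :: "nat \<Rightarrow> nat \<Rightarrow> (nat \<Rightarrow> nat \<Rightarrow> 'a::group_add) \<Rightarrow> (nat \<Rightarrow> nat \<Rightarrow> 'a) \<Rightarrow> nat" where
  "nrt_dist s r x y = nrt_weight s r (\<lambda>i j. x i j - y i j)"

definition nrt_ball :: "nat \<Rightarrow> nat \<Rightarrow> (nat \<Rightarrow> nat \<Rightarrow> 'a::group_add) \<Rightarrow> nat \<Rightarrow> (nat \<Rightarrow> nat \<Rightarrow> 'a) set" where
  "nrt_ball s r c R = {x \<in> mat_space s r. nrt_dist s r x c \<le> R}"

definition perfect_code :: "nat \<Rightarrow> nat \<Rightarrow> nat \<Rightarrow> (nat \<Rightarrow> nat \<Rightarrow> 'a::group_add) set \<Rightarrow> bool" where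
  "perfect_code s r R C \<longleftrightarrow> C \<subseteq> mat_space s r
     \<and> (\<forall>c\<in>C. \<forall>c'\<in>C. c \<noteq> c' \<longrightarrow> nrt_ball s r c R \<inter> nrt_ball s r c' R = {})
     \<and> (\<Union>c\<in>C. nrt_ball s r c R) = mat_space s r"

definition Perf :: "nat \<Rightarrow> nat \<Rightarrow> nat \<Rightarrow> (nat \<Rightarrow> nat \<Rightarrow> 'a::group_add) set set" where
  "Perf s r R = {C. perfect_code s r R C \<and> card C > 1 \<and> C \<noteq> mat_space s r}"

end

theory Submission
  imports Defs "HOL-Library.Cardinality" "HOL-Computational_Algebra.Primes"
begin

text \<open>Take s = 4, R = 2 and r = h + 2, so that delta = 2 - r = -h. Splitting off one row at a
  time, the NRT ball of radius 2 in F_q^{4 x r} has 10p^2 + 8p + 1 elements, where p = q - 1.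
  A perfect code tiles the space by translates of this ball, so this number would divide
  q^{4r}. But it equals 10q^2 - 12q + 3, so each of its prime factors divides both q and 3;
  hence 3 divides q, the number is 3M with M = 1 (mod 3) and M > 1, and a prime factor of M
  gives a contradiction.\<close>

definition row_space :: "nat \<Rightarrow> (nat \<Rightarrow> 'a::zero) set" where
  "row_space r = {y. \<forall>j\<ge>r. y j = 0}"

lemma row_space_Suc_bij:
  "bij_betw (\<lambda>(y, a). y(r := a)) (row_space r \<times> UNIV) (row_space (Suc r) :: (nat \<Rightarrow> 'a::zero) set)"
proof -
  have "y \<in> (\<lambda>(y, a). y(r := a)) ` (row_space r \<times> UNIV)" if "y \<in> row_space (Suc r)" for y :: "nat \<Rightarrow> 'a"
    using that by (intro image_eqI[where x = "(y(r := 0), y r)"]) (auto simp: row_space_def)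
  then show ?thesis
    by (auto simp: bij_betw_def inj_on_def row_space_def fun_eq_iff)
qed

lemma mat_space_Suc_bij:
  "bij_betw (\<lambda>(z, x). x(s := z)) (row_space r \<times> mat_space s r)
     (mat_space (Suc s) r :: (nat \<Rightarrow> nat \<Rightarrow> 'a::zero) set)"
proof -
  have "w \<in> (\<lambda>(z, x). x(s := z)) ` (row_space r \<times> mat_space s r)"
    if "w \<in> mat_space (Suc s) r" for w :: "nat \<Rightarrow> nat \<Rightarrow> 'a"
    using that by (intro image_eqI[where x = "(w s, w(s := \<lambda>_. 0))"])
      (auto simp: row_space_def mat_space_def)
  moreover have "inj_on (\<lambda>(z, x). x(s := z)) (row_space r \<times> (mat_space s r :: (nat \<Rightarrow> nat \<Rightarrow> 'a) set))"
  proof (rule inj_onI, clarsimp)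
    fix z z' :: "nat \<Rightarrow> 'a" and x x' :: "nat \<Rightarrow> nat \<Rightarrow> 'a"
    assume x: "x \<in> mat_space s r" "x' \<in> mat_space s r" and eq: "x(s := z) = x'(s := z')"
    have "x i = x' i" for i
    proof (cases "i = s")
      case True
      then show ?thesis using x by (auto simp: mat_space_def)
    next
      case False
      then show ?thesis using fun_cong[OF eq, of i] by simp
    qed
    then show "z = z' \<and> x = x'" using fun_cong[OF eq, of s] by auto
  qed
  ultimately show ?thesis
    by (auto simp: bij_betw_def row_space_def mat_space_def)
qed

lemma card_row_space: "card (row_space r :: (nat \<Rightarrow> 'a::{zero,finite}) set) = CARD('a) ^ r"
proof (induction r)
  case 0
  have "row_space 0 = {\<lambda>_. 0 :: 'a}" by (auto simp: row_space_def)
  then show ?case by simp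
next
  case (Suc r)
  then show ?case
    using bij_betw_same_card[OF row_space_Suc_bij[of r, where 'a = 'a]]
    by (simp add: card_cartesian_product mult.commute)
qed

lemma card_mat_space: "card (mat_space s r :: (nat \<Rightarrow> nat \<Rightarrow> 'a::{zero,finite}) set) = CARD('a) ^ (s * r)"
proof (induction s)
  case 0
  have "mat_space 0 r = {\<lambda>_ _. 0 :: 'a}" by (auto simp: mat_space_def)
  then show ?case by simp
next
  case (Suc s)
  then show ?case
    using bij_betw_same_card[OF mat_space_Suc_bij[of s r, where 'a = 'a]]
    by (simp add: card_cartesian_product card_row_space power_add)
qed

lemma finite_mat_space: "finite (mat_space s r :: (nat \<Rightarrow> nat \<Rightarrow> 'a::{zero,finite}) set)"
  using card_mat_space[of s r, where 'a = 'a] card_ge_0_finite by force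

lemma finite_row_space: "finite (row_space r :: (nat \<Rightarrow> 'a::{zero,finite}) set)"
  using card_row_space[of r, where 'a = 'a] card_ge_0_finite by force

lemma row_weight_eq_Suc_iff:
  assumes "y \<in> row_space r" and "k < r"
  shows "row_weight r y = Suc k \<longleftrightarrow> y k \<noteq> 0 \<and> (\<forall>j>k. y j = 0)"
proof
  assume w: "row_weight r y = Suc k"
  let ?S = "{j. j < r \<and> y j \<noteq> 0}"
  have "?S \<noteq> {}" and M: "Max ?S = k" using w by (auto simp: row_weight_def split: if_splits)
  then have "k \<in> ?S" using Max_in[of ?S] by auto
  moreover have "y j = 0" if "k < j" for j
    using Max_ge[of ?S j] M that assms(1) by (cases "j < r") (auto simp: row_space_def)
  ultimately show "y k \<noteq> 0 \<and> (\<forall>j>k. y j = 0)" by auto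
next
  assume "y k \<noteq> 0 \<and> (\<forall>j>k. y j = 0)"
  moreover from this have "Max {j. j < r \<and> y j \<noteq> 0} = k"
    using assms(2) by (intro Max_eqI) (auto simp: not_less[symmetric])
  ultimately show "row_weight r y = Suc k" using assms(2) by (auto simp: row_weight_def)
qed

lemma rows_of_row_weight_0: "{y \<in> row_space r. row_weight r y = 0} = {\<lambda>_. 0 :: 'a::zero}"
  by (auto simp: row_weight_def row_space_def fun_eq_iff not_less[symmetric])

lemma card_rows_of_row_weight_Suc:
  assumes "k < r"
  shows "card {y \<in> (row_space r :: (nat \<Rightarrow> 'a::{zero,finite}) set). row_weight r y = Suc k} =
    (CARD('a) - 1) * CARD('a) ^ k"
proof -
  have nonzero_last: "row_space k \<times> (UNIV - {0}) = {ya \<in> row_space k \<times> UNIV. snd ya \<noteq> (0::'a)}"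
    by auto
  have weight: "{y \<in> (row_space r :: (nat \<Rightarrow> 'a) set). row_weight r y = Suc k} =
      {y \<in> row_space (Suc k). y k \<noteq> 0}"
    using assms row_weight_eq_Suc_iff[OF _ assms] by (auto simp: row_space_def)
  have bij: "bij_betw (\<lambda>(y, a). y(k := a)) (row_space k \<times> (UNIV - {0}))
      {y \<in> (row_space r :: (nat \<Rightarrow> 'a) set). row_weight r y = Suc k}"
    unfolding nonzero_last weight by (rule bij_betw_Collect[OF row_space_Suc_bij]) auto
  show ?thesis
    using bij_betw_same_card[OF bij, symmetric]
    by (simp add: card_cartesian_product card_row_space card_Diff_singleton mult.commute)
qed

lemma nrt_ball_zero:
  "nrt_ball s r (\<lambda>_ _. 0) R = {x \<in> mat_space s r. nrt_weight s r x \<le> R}"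
  by (simp add: nrt_ball_def nrt_dist_def)

lemma finite_nrt_ball: "finite (nrt_ball s r c R :: (nat \<Rightarrow> nat \<Rightarrow> 'a::{group_add,finite}) set)"
  unfolding nrt_ball_def by (rule finite_subset[OF _ finite_mat_space]) auto

lemma nrt_weight_fun_upd:
  "x \<in> mat_space s r \<Longrightarrow> nrt_weight (Suc s) r (x(s := z)) = row_weight r z + nrt_weight s r x"
  by (simp add: nrt_weight_def lessThan_Suc)

lemma card_nrt_ball_Suc_rows:
  "card (nrt_ball (Suc s) r (\<lambda>_ _. 0) R :: (nat \<Rightarrow> nat \<Rightarrow> 'a::{group_add,finite}) set) =
     (\<Sum>w\<le>R. card {y \<in> (row_space r :: (nat \<Rightarrow> 'a) set). row_weight r y = w} *
              card (nrt_ball s r (\<lambda>_ _. 0) (R - w) :: (nat \<Rightarrow> nat \<Rightarrow> 'a) set))"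
proof -
  let ?Y = "{y \<in> (row_space r :: (nat \<Rightarrow> 'a) set). row_weight r y \<le> R}"
  let ?B = "\<lambda>w. nrt_ball s r (\<lambda>_ _. 0) (R - w) :: (nat \<Rightarrow> nat \<Rightarrow> 'a) set"
  let ?S = "{yx \<in> (row_space r :: (nat \<Rightarrow> 'a) set) \<times> (mat_space s r :: (nat \<Rightarrow> nat \<Rightarrow> 'a) set).
              row_weight r (fst yx) + nrt_weight s r (snd yx) \<le> R}"
  have "bij_betw (\<lambda>(y, x). x(s := y)) ?S
          (nrt_ball (Suc s) r (\<lambda>_ _. 0) R :: (nat \<Rightarrow> nat \<Rightarrow> 'a) set)"
    unfolding nrt_ball_zero
    by (rule bij_betw_Collect[OF mat_space_Suc_bij]) (auto simp: nrt_weight_fun_upd)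
  then have "card (nrt_ball (Suc s) r (\<lambda>_ _. 0) R :: (nat \<Rightarrow> nat \<Rightarrow> 'a) set) = card ?S"
    by (rule bij_betw_same_card[symmetric])
  also have "?S = (SIGMA y:?Y. ?B (row_weight r y))"
    by (auto simp: nrt_ball_zero)
  also have "card \<dots> = (\<Sum>y\<in>?Y. card (?B (row_weight r y)))"
    using finite_row_space[where 'a = 'a] by (simp add: finite_nrt_ball)
  also have "\<dots> = (\<Sum>w\<le>R. \<Sum>y\<in>{y \<in> ?Y. row_weight r y = w}. card (?B (row_weight r y)))"
    using finite_row_space[where 'a = 'a] by (intro sum.group[symmetric]) auto
  also have "\<dots> = (\<Sum>w\<le>R. card {y \<in> (row_space r :: (nat \<Rightarrow> 'a) set). row_weight r y = w} * card (?B w))"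
    by (intro sum.cong refl) (auto intro: arg_cong2[where f = "(*)"] arg_cong[where f = card])
  finally show ?thesis .
qed

lemma card_nrt_ball_0_rows: "card (nrt_ball 0 r (\<lambda>_ _. 0) R :: (nat \<Rightarrow> nat \<Rightarrow> 'a::group_add) set) = 1"
proof -
  have "(nrt_ball 0 r (\<lambda>_ _. 0) R :: (nat \<Rightarrow> nat \<Rightarrow> 'a) set) = {\<lambda>_ _. 0}"
    by (auto simp: nrt_ball_zero mat_space_def nrt_weight_def)
  then show ?thesis by simp
qed

lemma card_nrt_ball_radius_0:
  "card (nrt_ball s r (\<lambda>_ _. 0) 0 :: (nat \<Rightarrow> nat \<Rightarrow> 'a::{group_add,finite}) set) = 1"
  by (induction s) (simp_all add: card_nrt_ball_Suc_rows card_nrt_ball_0_rows rows_of_row_weight_0)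

lemma card_nrt_ball_radius_1:
  assumes "1 \<le> r"
  shows "card (nrt_ball s r (\<lambda>_ _. 0) 1 :: (nat \<Rightarrow> nat \<Rightarrow> 'a::{group_add,finite}) set) =
    1 + s * (CARD('a) - 1)"
  using assms
  by (induction s) (simp_all add: card_nrt_ball_Suc_rows card_nrt_ball_0_rows rows_of_row_weight_0
      card_nrt_ball_radius_0 card_rows_of_row_weight_Suc[of 0 r, simplified])

lemma card_nrt_ball_radius_2:
  assumes "2 \<le> r"
  shows "card (nrt_ball s r (\<lambda>_ _. 0) 2 :: (nat \<Rightarrow> nat \<Rightarrow> 'a::{group_add,finite}) set) =
    1 + s * (CARD('a) - 1) * (CARD('a) + 1) + (s choose 2) * (CARD('a) - 1)^2"
proof -
  obtain p where q: "CARD('a) = Suc p"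
    using gr0_implies_Suc[of "CARD('a)"] by auto
  let ?N = "\<lambda>w. card {y \<in> (row_space r :: (nat \<Rightarrow> 'a) set). row_weight r y = w}"
  let ?B = "\<lambda>s R. card (nrt_ball s r (\<lambda>_ _. 0) R :: (nat \<Rightarrow> nat \<Rightarrow> 'a) set)"
  have N: "?N 0 = 1" "?N 1 = p" "?N 2 = Suc p * p"
    using assms card_rows_of_row_weight_Suc[of 0 r, where 'a = 'a] card_rows_of_row_weight_Suc[of 1 r, where 'a = 'a]
    by (simp_all add: rows_of_row_weight_0 q numeral_2_eq_2)
  have step: "?B (Suc s) 2 = ?B s 2 + p * (1 + s * p) + Suc p * p" for s
  proof -
    have "?B (Suc s) 2 = (\<Sum>w\<le>2. ?N w * ?B s (2 - w))"
      by (rule card_nrt_ball_Suc_rows)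
    also have "\<dots> = ?N 0 * ?B s 2 + ?N 1 * ?B s 1 + ?N 2 * ?B s 0"
      by (simp add: numeral_2_eq_2 atMost_Suc)
    also have "\<dots> = ?B s 2 + p * (1 + s * p) + Suc p * p"
      using assms by (simp only: N card_nrt_ball_radius_0 card_nrt_ball_radius_1 q) simp
    finally show ?thesis .
  qed
  have choose_Suc: "Suc s choose 2 = (s choose 2) + s" for s
    by (simp add: numeral_2_eq_2)
  show ?thesis
    unfolding q
    by (induction s) (simp_all add: step card_nrt_ball_0_rows choose_Suc algebra_simps power2_eq_square)
qed

lemma nrt_ball_translate:
  assumes "c \<in> mat_space s r"
  shows "bij_betw (\<lambda>x i j. x i j + c i j) (nrt_ball s r (\<lambda>_ _. 0) R) (nrt_ball s r c R)"
proof -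
  have "x \<in> (\<lambda>x i j. x i j + c i j) ` nrt_ball s r (\<lambda>_ _. 0) R" if "x \<in> nrt_ball s r c R" for x
    using that assms
    by (intro image_eqI[where x = "\<lambda>i j. x i j - c i j"])
      (auto simp: nrt_ball_def nrt_dist_def mat_space_def)
  with assms show ?thesis
    by (auto simp: bij_betw_def inj_on_def fun_eq_iff nrt_ball_def nrt_dist_def mat_space_def)
qed

lemma perfect_code_card:
  fixes C :: "(nat \<Rightarrow> nat \<Rightarrow> 'a::{group_add,finite}) set"
  assumes "perfect_code s r R C"
  shows "card C * card (nrt_ball s r (\<lambda>_ _. 0) R :: (nat \<Rightarrow> nat \<Rightarrow> 'a) set) = CARD('a) ^ (s * r)"
proof -
  have C: "C \<subseteq> mat_space s r"
    and disjoint: "\<forall>c\<in>C. \<forall>c'\<in>C. c \<noteq> c' \<longrightarrow> nrt_ball s r c R \<inter> nrt_ball s r c' R = {}"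
    and cover: "(\<Union>c\<in>C. nrt_ball s r c R) = (mat_space s r :: (nat \<Rightarrow> nat \<Rightarrow> 'a) set)"
    using assms by (auto simp: perfect_code_def)
  have "CARD('a) ^ (s * r) = card (\<Union>c\<in>C. nrt_ball s r c R)"
    by (simp add: cover card_mat_space)
  also have "\<dots> = (\<Sum>c\<in>C. card (nrt_ball s r c R))"
    using C disjoint finite_subset[OF C finite_mat_space]
    by (intro card_UN_disjoint) (auto simp: finite_nrt_ball)
  also have "\<dots> = (\<Sum>c\<in>C. card (nrt_ball s r (\<lambda>_ _. 0) R :: (nat \<Rightarrow> nat \<Rightarrow> 'a) set))"
    using C by (intro sum.cong refl bij_betw_same_card[symmetric, OF nrt_ball_translate]) auto
  finally show ?thesis by simp
qed

lemma not_dvd_Suc_power: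
  fixes p n :: nat
  assumes "p \<ge> 1"
  shows "\<not> (10 * p^2 + 8 * p + 1) dvd (Suc p) ^ n"
proof
  define N q where "N = 10 * p^2 + 8 * p + 1" and "q = Suc p"
  assume "(10 * p^2 + 8 * p + 1) dvd (Suc p) ^ n"
  then have N_dvd: "N dvd q ^ n" by (simp add: N_def q_def)
  have key: "N + 12 * q = 10 * q^2 + 3"
    by (simp add: N_def q_def power2_eq_square algebra_simps)
  have prime_factor_3: "t = 3" if t: "prime t" "t dvd N" for t
  proof -
    have "t dvd q"
      using t N_dvd by (meson dvd_trans prime_dvd_power)
    then have "t dvd 10 * q^2" and "t dvd N + 12 * q"
      using t by (simp_all add: power2_eq_square)
    then have "t dvd 3"
      by (simp add: key dvd_add_right_iff)
    with t(1) show "t = 3"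
      by (simp add: primes_dvd_imp_eq)
  qed
  have N_gt: "N > 3" using assms by (simp add: N_def)
  then obtain t where "prime t" "t dvd N" using prime_factor_nat[of N] by auto
  then have "prime (3::nat)" "3 dvd N" using prime_factor_3 by blast+
  then have "3 dvd q"
    using N_dvd by (meson dvd_trans prime_dvd_power)
  then obtain k where k: "q = 3 * k" ..
  from \<open>3 dvd N\<close> obtain M where M: "N = 3 * M" ..
  have M_key: "M + 12 * k = 30 * k^2 + 1"
    using key by (simp add: M k power2_eq_square algebra_simps)
  obtain u where u: "prime u" "u dvd M" using prime_factor_nat[of M] M N_gt by auto
  then have "u = 3" using prime_factor_3 M by simp
  with u have "3 dvd M + 12 * k" by simp
  then have "(3::nat) dvd 30 * k^2 + 1" by (simp only: M_key)
  then show False by presburger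
qed

lemma no_perfect_code_4_rows_radius_2:
  fixes C :: "(nat \<Rightarrow> nat \<Rightarrow> 'a::{group_add,zero_neq_one,finite}) set"
  assumes "2 \<le> r"
  shows "\<not> perfect_code 4 r 2 C"
proof
  assume "perfect_code 4 r 2 C"
  then have packing: "card C * card (nrt_ball 4 r (\<lambda>_ _. 0) 2 :: (nat \<Rightarrow> nat \<Rightarrow> 'a) set) = CARD('a) ^ (4 * r)"
    by (rule perfect_code_card)
  have "card {0 :: 'a, 1} \<le> CARD('a)"
    by (rule card_mono) auto
  then obtain p where q: "CARD('a) = Suc p" and "p \<ge> 1"
    using gr0_implies_Suc[of "CARD('a)"] by auto
  have "card (nrt_ball 4 r (\<lambda>_ _. 0) 2 :: (nat \<Rightarrow> nat \<Rightarrow> 'a) set) = 10 * p^2 + 8 * p + 1"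
    using card_nrt_ball_radius_2[OF assms, of 4, where 'a = 'a]
    by (simp add: q eval_nat_numeral algebra_simps)
  with packing q have "(10 * p^2 + 8 * p + 1) dvd (Suc p) ^ (4 * r)"
    by (metis dvd_triv_right)
  with not_dvd_Suc_power[OF \<open>p \<ge> 1\<close>] show False ..
qed

theorem mainTheorem14:
  fixes h :: nat
  assumes "h > 0"
  shows "\<exists>s r R :: nat. s \<ge> 2 \<and> r \<ge> 2 \<and> R > 0 \<and>
           (int r + 1) * (int R + 1) - int s * int r - 1 = - int h \<and>
           Perf s r R = ({} :: (nat \<Rightarrow> nat \<Rightarrow> 'a::{field,finite}) set set)"
proof (intro exI conjI)
  show "Perf 4 (h + 2) 2 = ({} :: (nat \<Rightarrow> nat \<Rightarrow> 'a) set set)"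
    using no_perfect_code_4_rows_radius_2[of "h + 2"] by (auto simp: Perf_def)
qed simp_all

end
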